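(* Let $G$ be a looped simple graph and $M$ a transverse matroid of $G$. Then every matroid minor of $M$ is isomorphic to a transverse matroid of some vertex-minor of $G$.
   Context: A looped simple graph is a finite graph in which each vertex carries at most one loop and no two distinct vertices are joined by more than one edge; "neighbors" are distinct vertices joined by a non-loop edge. $A(G)$ is the $V(G)\times V(G)$ matrix over $GF(2)$ with diagonal entry $1$ exactly at looped vertices and off-diagonal entry $1$ exactly for adjacent pairs. $IAS(G)=(I\mid A(G)\mid A(G)+I)$ over $GF(2)$, rows indexed by $V(G)$; the $v$-columns of the three blocks are labelled $\phi_G(v),\chi_G(v),\psi_G(v)$. $M[IAS(G)]$ is the binary column matroid of $IAS(G)$ on $W(G)=\{\phi_G(v),\chi_G(v),\psi_G(v):v\in V(G)\}$. A transversal contains exactly one element of each vertex triple $\{\phi_G(v),\chi_G(v),\psi_G(v)\}$; a transverse matroid of $G$ is the restriction of $M[IAS(G)]$ to a transversal. $G_\ell^v$ complements the loop status of $v$; $G_s^v$ complements the adjacency status of every pair of distinct neighbors of $v$; $G_{ns}^v$ does this and also complements the loop status of every neighbor of $v$. A vertex-minor of $G$ is a graph obtained from $G$ by a finite sequence of these operations and vertex deletions. *)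

theory Defs
  imports Main "HOL-Library.Z2"
begin

text \<open>A looped simple graph is a pair (V, A) where V is the finite vertex set and
  A x y says that x and y are adjacent (x \<noteq> y) or, for x = y, that x carries a loop.\<close>

type_synonym 'a lgraph = "'a set \<times> ('a \<Rightarrow> 'a \<Rightarrow> bool)"

definition verts :: "'a lgraph \<Rightarrow> 'a set" where "verts G = fst G"
definition rel :: "'a lgraph \<Rightarrow> 'a \<Rightarrow> 'a \<Rightarrow> bool" where "rel G = snd G"

definition looped_simple_graph :: "'a lgraph \<Rightarrow> bool" where
  "looped_simple_graph G \<longleftrightarrow> finite (verts G)
     \<and> (\<forall>x y. rel G x y \<longrightarrow> x \<in> verts G \<and> y \<in> verts G)
     \<and> (\<forall>x y. rel G x y = rel G y x)"

definition neighbor :: "'a lgraph \<Rightarrow> 'a \<Rightarrow> 'a \<Rightarrow> bool" where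
  "neighbor G v x \<longleftrightarrow> x \<noteq> v \<and> rel G v x"

definition adjmat :: "'a lgraph \<Rightarrow> 'a \<Rightarrow> 'a \<Rightarrow> bit" where
  "adjmat G x y = (if rel G x y then 1 else 0)"

datatype 'a welt = Phi 'a | Chi 'a | Psi 'a

definition W :: "'a lgraph \<Rightarrow> 'a welt set" where
  "W G = Phi ` verts G \<union> Chi ` verts G \<union> Psi ` verts G"

text \<open>Columns of IAS(G) = (I | A(G) | A(G)+I), rows indexed by V(G).\<close>
fun col :: "'a lgraph \<Rightarrow> 'a welt \<Rightarrow> 'a \<Rightarrow> bit" where
  "col G (Phi v) w = (if w = v then 1 else 0)"
| "col G (Chi v) w = adjmat G w v"
| "col G (Psi v) w = adjmat G w v + (if w = v then 1 else 0)"

type_synonym 'e matroid = "'e set \<times> ('e set \<Rightarrow> bool)"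

definition ground :: "'e matroid \<Rightarrow> 'e set" where "ground M = fst M"
definition indep :: "'e matroid \<Rightarrow> 'e set \<Rightarrow> bool" where "indep M = snd M"

definition IAS_matroid :: "'a lgraph \<Rightarrow> 'a welt matroid" where
  "IAS_matroid G = (W G, \<lambda>I. I \<subseteq> W G \<and>
     (\<forall>c :: 'a welt \<Rightarrow> bit. (\<forall>w \<in> verts G. (\<Sum>e\<in>I. c e * col G e w) = 0)
        \<longrightarrow> (\<forall>e\<in>I. c e = 0)))"

definition transversal :: "'a lgraph \<Rightarrow> 'a welt set \<Rightarrow> bool" where
  "transversal G T \<longleftrightarrow> T \<subseteq> W G \<and>
     (\<forall>v \<in> verts G. card (T \<inter> {Phi v, Chi v, Psi v}) = 1)"

definition restrict_matroid :: "'e matroid \<Rightarrow> 'e set \<Rightarrow> 'e matroid" where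
  "restrict_matroid M X = (X, \<lambda>I. I \<subseteq> X \<and> indep M I)"

definition transverse_matroid :: "'a lgraph \<Rightarrow> 'a welt set \<Rightarrow> 'a welt matroid" where
  "transverse_matroid G T = restrict_matroid (IAS_matroid G) T"

definition delete_matroid :: "'e matroid \<Rightarrow> 'e set \<Rightarrow> 'e matroid" where
  "delete_matroid M D = restrict_matroid M (ground M - D)"

definition basis_of :: "'e matroid \<Rightarrow> 'e set \<Rightarrow> 'e set \<Rightarrow> bool" where
  "basis_of M X B \<longleftrightarrow> B \<subseteq> X \<and> indep M B \<and> (\<forall>B'. B \<subset> B' \<and> B' \<subseteq> X \<longrightarrow> \<not> indep M B')"

definition contract_matroid :: "'e matroid \<Rightarrow> 'e set \<Rightarrow> 'e matroid" where
  "contract_matroid M C = (ground M - C, \<lambda>J. J \<subseteq> ground M - C \<and>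
      (\<exists>B. basis_of M (C \<inter> ground M) B \<and> indep M (J \<union> B)))"

inductive matroid_minor :: "'e matroid \<Rightarrow> 'e matroid \<Rightarrow> bool" where
  refl: "matroid_minor M M"
| del: "matroid_minor M N \<Longrightarrow> D \<subseteq> ground N \<Longrightarrow> matroid_minor M (delete_matroid N D)"
| con: "matroid_minor M N \<Longrightarrow> C \<subseteq> ground N \<Longrightarrow> matroid_minor M (contract_matroid N C)"

definition matroid_iso :: "'e matroid \<Rightarrow> 'f matroid \<Rightarrow> bool" where
  "matroid_iso M N \<longleftrightarrow> (\<exists>f. bij_betw f (ground M) (ground N) \<and>
      (\<forall>I \<subseteq> ground M. indep M I \<longleftrightarrow> indep N (f ` I)))"

definition loop_compl :: "'a \<Rightarrow> 'a lgraph \<Rightarrow> 'a lgraph" where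
  "loop_compl v G = (verts G, \<lambda>x y. if x = v \<and> y = v then \<not> rel G x y else rel G x y)"

definition s_compl :: "'a \<Rightarrow> 'a lgraph \<Rightarrow> 'a lgraph" where
  "s_compl v G = (verts G, \<lambda>x y.
     if x \<noteq> y \<and> neighbor G v x \<and> neighbor G v y then \<not> rel G x y else rel G x y)"

definition ns_compl :: "'a \<Rightarrow> 'a lgraph \<Rightarrow> 'a lgraph" where
  "ns_compl v G = (verts G, \<lambda>x y.
     if (x \<noteq> y \<and> neighbor G v x \<and> neighbor G v y) \<or> (x = y \<and> neighbor G v x)
     then \<not> rel G x y else rel G x y)"

definition delete_vertex :: "'a \<Rightarrow> 'a lgraph \<Rightarrow> 'a lgraph" where
  "delete_vertex v G = (verts G - {v}, \<lambda>x y. x \<noteq> v \<and> y \<noteq> v \<and> rel G x y)"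

inductive vertex_minor :: "'a lgraph \<Rightarrow> 'a lgraph \<Rightarrow> bool" where
  refl: "vertex_minor G G"
| loop: "vertex_minor G H \<Longrightarrow> v \<in> verts H \<Longrightarrow> vertex_minor G (loop_compl v H)"
| s: "vertex_minor G H \<Longrightarrow> v \<in> verts H \<Longrightarrow> vertex_minor G (s_compl v H)"
| ns: "vertex_minor G H \<Longrightarrow> v \<in> verts H \<Longrightarrow> vertex_minor G (ns_compl v H)"
| del: "vertex_minor G H \<Longrightarrow> v \<in> verts H \<Longrightarrow> vertex_minor G (delete_vertex v H)"

end

theory Submission
  imports Defs
begin

text \<open>
  A transverse matroid of H is the binary matroid of the columns of IAS(H) indexed by a
  transversal, and it suffices to realise deleting or contracting a single element e, at a
  vertex v, by a vertex-minor. Local complementation at z (the operation ns) adds row z to the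
  rows of the neighbours of z, which does not change the matroid of columns of elements away
  from z; deleting a vertex deletes its row.

  To delete e, delete v, after local complementation at v if the unit vector of v lies in the
  span of the other columns. This makes the unit vector unspanned, because the unit vector and
  the neighbourhood vector of v are never both spanned: the columns of a transversal span a
  totally isotropic subspace.

  To contract e, pivot on a row where the column of e is nonzero. If that is row v, the pivot
  amounts to deleting v, after local complementation at v if the column involves A(H).
  Otherwise the column of e is the neighbourhood vector of v; it is zero if v is isolated, and
  contraction is deletion, while for a neighbour u of v local complementation at u toggles the
  loop at v and yields an isomorphic transverse matroid where the column of e has a 1 in row v.
\<close>

section \<open>Binary matroids\<close>

declare add_bit_eq_xor[simp del] mult_bit_eq_and[simp del]

lemma bit_add_self[simp]: "(x::bit) + x = 0"
  by (cases x) simp_all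

lemma bit_add_self_left[simp]: "(x::bit) + (x + y) = y"
  by (cases x; cases y) simp_all

lemma bit_add_eq_0_iff: "((x::bit) + y = 0) = (x = y)"
  by (cases x; cases y) simp_all

definition lin_indep :: "('e \<Rightarrow> 'a \<Rightarrow> bit) \<Rightarrow> 'e set \<Rightarrow> bool" where
  "lin_indep v I \<longleftrightarrow> (\<forall>c. (\<forall>w. (\<Sum>e\<in>I. c e * v e w) = 0) \<longrightarrow> (\<forall>e\<in>I. c e = 0))"

definition lin_indep_mod :: "('e \<Rightarrow> 'a \<Rightarrow> bit) \<Rightarrow> 'e set \<Rightarrow> 'e set \<Rightarrow> bool" where
  "lin_indep_mod v C J \<longleftrightarrow> (\<forall>c. (\<forall>w. (\<Sum>e\<in>J \<union> C. c e * v e w) = 0) \<longrightarrow> (\<forall>e\<in>J. c e = 0))"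

definition in_span :: "('e \<Rightarrow> 'a \<Rightarrow> bit) \<Rightarrow> 'e set \<Rightarrow> ('a \<Rightarrow> bit) \<Rightarrow> bool" where
  "in_span v B x \<longleftrightarrow> (\<exists>d. \<forall>w. x w = (\<Sum>e\<in>B. d e * v e w))"

definition unit_vec :: "'a \<Rightarrow> 'a \<Rightarrow> bit" where
  "unit_vec v w = (if w = v then 1 else 0)"

definition binary_matroid :: "'e set \<Rightarrow> ('e \<Rightarrow> 'a \<Rightarrow> bit) \<Rightarrow> 'e matroid" where
  "binary_matroid X v = (X, \<lambda>I. I \<subseteq> X \<and> lin_indep v I)"

lemma ground_binary_matroid[simp]: "ground (binary_matroid X v) = X"
  by (simp add: ground_def binary_matroid_def)

lemma indep_binary_matroid[simp]: "indep (binary_matroid X v) I \<longleftrightarrow> I \<subseteq> X \<and> lin_indep v I"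
  by (simp add: indep_def binary_matroid_def)

lemma lin_indep_mod_empty[simp]: "lin_indep_mod v {} J = lin_indep v J"
  by (simp add: lin_indep_mod_def lin_indep_def)

lemma lin_indep_cong:
  assumes "\<And>e w. e \<in> I \<Longrightarrow> v e w = v' e w"
  shows "lin_indep v I = lin_indep v' I"
  unfolding lin_indep_def using assms by (simp cong: sum.cong)

lemma binary_matroid_eqI:
  assumes "\<And>I. I \<subseteq> X \<Longrightarrow> lin_indep v I = lin_indep v' I"
  shows "binary_matroid X v = binary_matroid X v'"
  unfolding binary_matroid_def using assms by auto

lemma binary_matroid_cong:
  assumes "\<And>e w. e \<in> X \<Longrightarrow> v e w = v' e w"
  shows "binary_matroid X v = binary_matroid X v'"
  using assms by (intro binary_matroid_eqI lin_indep_cong) auto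

lemma delete_binary_matroid:
  "D \<subseteq> X \<Longrightarrow> delete_matroid (binary_matroid X v) D = binary_matroid (X - D) v"
  unfolding delete_matroid_def restrict_matroid_def binary_matroid_def ground_def indep_def
  by auto

lemma in_span_add:
  assumes "in_span v B x" "in_span v B y"
  shows "in_span v B (\<lambda>w. x w + y w)"
proof -
  obtain dx dy where "\<And>w. x w = (\<Sum>e\<in>B. dx e * v e w)" "\<And>w. y w = (\<Sum>e\<in>B. dy e * v e w)"
    using assms unfolding in_span_def by blast
  then show ?thesis
    unfolding in_span_def by (intro exI[of _ "\<lambda>e. dx e + dy e"]) (simp add: sum.distrib distrib_right)
qed

lemma lin_indep_reindex:
  assumes inv: "\<And>e. \<sigma> (\<sigma> e) = e"
  shows "lin_indep v (\<sigma> ` I) = lin_indep (\<lambda>e. v (\<sigma> e)) I"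
proof -
  have inj: "inj_on \<sigma> I"
    by (metis inj_onI inv)
  have sum_image: "(\<Sum>e\<in>\<sigma> ` I. c e * v e w) = (\<Sum>e\<in>I. c (\<sigma> e) * v (\<sigma> e) w)" for c w
    using sum.reindex[OF inj, of "\<lambda>e. c e * v e w"] by simp
  show ?thesis
  proof
    assume indep: "lin_indep v (\<sigma> ` I)"
    show "lin_indep (\<lambda>e. v (\<sigma> e)) I"
      unfolding lin_indep_def
    proof (intro allI impI ballI)
      fix c e
      assume "\<forall>w. (\<Sum>e\<in>I. c e * v (\<sigma> e) w) = 0" and "e \<in> I"
      then have "\<forall>w. (\<Sum>e\<in>\<sigma> ` I. c (\<sigma> e) * v e w) = 0"
        by (simp add: sum_image inv)
      with indep \<open>e \<in> I\<close> show "c e = 0"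
        unfolding lin_indep_def by (metis image_eqI inv)
    qed
  next
    assume indep: "lin_indep (\<lambda>e. v (\<sigma> e)) I"
    show "lin_indep v (\<sigma> ` I)"
      unfolding lin_indep_def sum_image
    proof (intro allI impI ballI)
      fix c e
      assume "\<forall>w. (\<Sum>e\<in>I. c (\<sigma> e) * v (\<sigma> e) w) = 0" and "e \<in> \<sigma> ` I"
      with indep show "c e = 0"
        unfolding lin_indep_def by (auto dest: spec[of _ "\<lambda>e. c (\<sigma> e)"])
    qed
  qed
qed

text \<open>This adds a w times row z to row w; since row z itself is unchanged, it is invertible.\<close>
lemma lin_indep_add_row:
  fixes v :: "'e \<Rightarrow> 'a \<Rightarrow> bit"
  assumes "a z = 0"
  shows "lin_indep (\<lambda>e w. v e w + v e z * a w) I = lin_indep v I"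
proof -
  have sum_eq: "(\<Sum>e\<in>I. c e * (v e w + v e z * a w))
      = (\<Sum>e\<in>I. c e * v e w) + (\<Sum>e\<in>I. c e * v e z) * a w" for c w
    by (simp add: distrib_left sum.distrib sum_distrib_right mult.assoc)
  have "(\<forall>w. (\<Sum>e\<in>I. c e * v e w) + (\<Sum>e\<in>I. c e * v e z) * a w = 0)
      \<longleftrightarrow> (\<forall>w. (\<Sum>e\<in>I. c e * v e w) = 0)" for c
  proof
    assume h: "\<forall>w. (\<Sum>e\<in>I. c e * v e w) + (\<Sum>e\<in>I. c e * v e z) * a w = 0"
    then have "(\<Sum>e\<in>I. c e * v e z) = 0"
      using h[rule_format, of z] assms by simp
    with h show "\<forall>w. (\<Sum>e\<in>I. c e * v e w) = 0"
      by simp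
  qed simp
  then show ?thesis
    unfolding lin_indep_def sum_eq by simp
qed

lemma lin_indep_zero_row:
  fixes v :: "'e \<Rightarrow> 'a \<Rightarrow> bit"
  assumes not_span: "\<not> in_span v S (unit_vec z)"
    and "I \<subseteq> S" and "finite S"
  shows "lin_indep (\<lambda>e w. if w = z then 0 else v e w) I = lin_indep v I"
proof -
  have sum_eq: "(\<Sum>e\<in>I. c e * (if w = z then 0 else v e w))
      = (if w = z then 0 else (\<Sum>e\<in>I. c e * v e w))" for c w
    by simp
  have "(\<Sum>e\<in>I. c e * v e z) = 0"
    if zero: "\<forall>w. w \<noteq> z \<longrightarrow> (\<Sum>e\<in>I. c e * v e w) = 0" for c
  proof (rule ccontr)
    assume "(\<Sum>e\<in>I. c e * v e z) \<noteq> 0"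
    then have "unit_vec z w = (\<Sum>e\<in>I. c e * v e w)" for w
      using zero by (auto simp: unit_vec_def)
    also have "(\<Sum>e\<in>I. c e * v e w) = (\<Sum>e\<in>S. (if e \<in> I then c e else 0) * v e w)" for w
      using assms(2,3) by (intro sum.mono_neutral_cong_left) auto
    finally have "in_span v S (unit_vec z)"
      unfolding in_span_def by (intro exI[of _ "\<lambda>e. if e \<in> I then c e else 0"]) blast
    with not_span show False ..
  qed
  then have "(\<forall>w. w \<noteq> z \<longrightarrow> (\<Sum>e\<in>I. c e * v e w) = 0) \<longleftrightarrow> (\<forall>w. (\<Sum>e\<in>I. c e * v e w) = 0)" for c
    by metis
  then show ?thesis
    unfolding lin_indep_def sum_eq by (simp add: if_split_mem2)
qed

lemma basis_of_binary_matroid_exists: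
  assumes "finite C" "C \<subseteq> X"
  obtains B where "basis_of (binary_matroid X v) C B"
proof -
  let ?F = "{B. B \<subseteq> C \<and> lin_indep v B}"
  have "?F \<subseteq> Pow C"
    by blast
  then have "finite ?F"
    using assms(1) by (simp add: finite_subset)
  moreover have "{} \<in> ?F"
    by (simp add: lin_indep_def)
  ultimately obtain B where B: "B \<in> ?F" "\<forall>B'\<in>?F. B \<le> B' \<longrightarrow> B = B'"
    using finite_has_maximal[of ?F] by blast
  have "basis_of (binary_matroid X v) C B"
    unfolding basis_of_def indep_binary_matroid
  proof (intro conjI allI impI)
    show "B \<subseteq> C" "B \<subseteq> X" "lin_indep v B"
      using B(1) assms(2) by auto
  next
    fix B'
    assume "B \<subset> B' \<and> B' \<subseteq> C"
    then show "\<not> (B' \<subseteq> X \<and> lin_indep v B')"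
      using B(2) by blast
  qed
  then show thesis ..
qed

lemma in_span_basis:
  assumes basis: "basis_of (binary_matroid X v) C B" and "x \<in> C" "finite C" "C \<subseteq> X"
  shows "in_span v B (v x)"
proof -
  have B: "B \<subseteq> C" "lin_indep v B"
    using basis by (auto simp: basis_of_def)
  have "finite B"
    using B(1) \<open>finite C\<close> by (rule finite_subset)
  show ?thesis
  proof (cases "x \<in> B")
    case True
    have "(\<Sum>e\<in>B. (if e = x then 1 else 0) * v e w) = (\<Sum>e\<in>B. if e = x then v e w else 0)" for w
      by (intro sum.cong) auto
    also have "\<dots> w = v x w" for w
      using True \<open>finite B\<close> by simp
    finally show ?thesis
      unfolding in_span_def by (intro exI[of _ "\<lambda>e. if e = x then 1 else 0"]) simp
  next
    case False
    have "\<not> lin_indep v (insert x B)"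
      using basis False \<open>x \<in> C\<close> \<open>C \<subseteq> X\<close> B(1) unfolding basis_of_def by auto
    then obtain c where dep: "\<And>w. c x * v x w + (\<Sum>e\<in>B. c e * v e w) = 0"
      and nonzero: "\<exists>e\<in>insert x B. c e \<noteq> 0"
      using False \<open>finite B\<close> unfolding lin_indep_def by auto
    have "c x = 1"
    proof (rule ccontr)
      assume "c x \<noteq> 1"
      then have "c x = 0" by simp
      with dep have "\<forall>w. (\<Sum>e\<in>B. c e * v e w) = 0"
        by simp
      with B(2) have "\<forall>e\<in>B. c e = 0"
        unfolding lin_indep_def by blast
      with nonzero \<open>c x = 0\<close> show False
        by auto
    qed
    with dep have "v x w = (\<Sum>e\<in>B. c e * v e w)" for w
      by (metis bit_add_eq_0_iff mult_1)
    then show ?thesis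
      unfolding in_span_def by blast
  qed
qed

lemma in_span_sum:
  fixes v :: "'e \<Rightarrow> 'a \<Rightarrow> bit"
  assumes "finite C" "\<forall>x\<in>C. in_span v B (v x)"
  shows "in_span v B (\<lambda>w. \<Sum>x\<in>C. c x * v x w)"
  using assms
proof (induction C rule: finite_induct)
  case empty
  show ?case
    unfolding in_span_def by (rule exI[of _ "\<lambda>_. 0"]) simp
next
  case (insert x F)
  obtain d where d: "\<And>w. (\<Sum>x\<in>F. c x * v x w) = (\<Sum>e\<in>B. d e * v e w)"
    using insert unfolding in_span_def by auto
  obtain dx where dx: "\<And>w. v x w = (\<Sum>e\<in>B. dx e * v e w)"
    using insert unfolding in_span_def by auto
  have "(\<Sum>x\<in>insert x F. c x * v x w) = (\<Sum>e\<in>B. (c x * dx e + d e) * v e w)" for w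
    using insert(1,2)
    by (simp add: d dx sum_distrib_left sum.distrib algebra_simps)
  then show ?case
    unfolding in_span_def by (intro exI[of _ "\<lambda>e. c x * dx e + d e"]) blast
qed

text \<open>Contraction by C is independence modulo C: a basis B of C spans every column of C.\<close>
lemma lin_indep_Un_basis_iff:
  assumes basis: "basis_of (binary_matroid X v) C B" and "C \<subseteq> X" "finite X"
    and "J \<inter> C = {}" "J \<subseteq> X"
  shows "lin_indep v (J \<union> B) \<longleftrightarrow> lin_indep_mod v C J"
proof -
  have B: "B \<subseteq> C" "lin_indep v B"
    using basis by (auto simp: basis_of_def)
  have fin: "finite C" "finite B" "finite J"
    using assms B(1) by (meson finite_subset)+
  have disj: "J \<inter> B = {}"
    using assms(4) B(1) by auto
  have split_JC: "(\<Sum>e\<in>J \<union> C. c e * v e w) = (\<Sum>e\<in>J. c e * v e w) + (\<Sum>e\<in>C. c e * v e w)" for c w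
    using fin assms(4) by (simp add: sum.union_disjoint)
  have split_JB: "(\<Sum>e\<in>J \<union> B. c e * v e w) = (\<Sum>e\<in>J. c e * v e w) + (\<Sum>e\<in>B. c e * v e w)" for c w
    using fin disj by (simp add: sum.union_disjoint)
  show ?thesis
  proof
    assume indep: "lin_indep v (J \<union> B)"
    show "lin_indep_mod v C J"
      unfolding lin_indep_mod_def
    proof (intro allI impI)
      fix c
      assume zero: "\<forall>w. (\<Sum>e\<in>J \<union> C. c e * v e w) = 0"
      have "in_span v B (\<lambda>w. \<Sum>x\<in>C - B. c x * v x w)"
        using fin(1) in_span_basis[OF basis _ fin(1) assms(2)] by (intro in_span_sum) auto
      then obtain d where d: "\<And>w. (\<Sum>x\<in>C - B. c x * v x w) = (\<Sum>e\<in>B. d e * v e w)"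
        unfolding in_span_def by auto
      define c' where "c' e = (if e \<in> B then c e + d e else c e)" for e
      have "(\<Sum>e\<in>J \<union> B. c' e * v e w) = (\<Sum>e\<in>J \<union> C. c e * v e w)" for w
      proof -
        have "(\<Sum>e\<in>B. c' e * v e w) = (\<Sum>e\<in>B. c e * v e w) + (\<Sum>x\<in>C - B. c x * v x w)"
          by (simp add: c'_def d sum.distrib algebra_simps)
        also have "\<dots> = (\<Sum>e\<in>C. c e * v e w)"
          using fin(1) B(1) by (metis sum.subset_diff add.commute)
        moreover have "(\<Sum>e\<in>J. c' e * v e w) = (\<Sum>e\<in>J. c e * v e w)"
          using disj by (intro sum.cong) (auto simp: c'_def)
        ultimately show ?thesis
          by (simp add: split_JB split_JC)
      qed
      then have "\<forall>e\<in>J \<union> B. c' e = 0"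
        using indep zero unfolding lin_indep_def by simp
      then show "\<forall>e\<in>J. c e = 0"
        using disj by (metis (no_types, lifting) UnI1 c'_def disjoint_iff)
    qed
  next
    assume indep_mod: "lin_indep_mod v C J"
    show "lin_indep v (J \<union> B)"
      unfolding lin_indep_def
    proof (intro allI impI)
      fix c
      assume zero: "\<forall>w. (\<Sum>e\<in>J \<union> B. c e * v e w) = 0"
      define c' where "c' e = (if e \<in> J \<union> B then c e else 0)" for e
      have "(\<Sum>e\<in>J \<union> C. c' e * v e w) = (\<Sum>e\<in>J \<union> B. c e * v e w)" for w
        using fin B(1) by (intro sum.mono_neutral_cong_right) (auto simp: c'_def)
      then have c_J: "\<forall>e\<in>J. c e = 0"
        using indep_mod zero unfolding lin_indep_mod_def c'_def by force
      then have "\<forall>w. (\<Sum>e\<in>B. c e * v e w) = 0"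
        using zero by (simp add: split_JB)
      then show "\<forall>e\<in>J \<union> B. c e = 0"
        using B(2) c_J unfolding lin_indep_def by blast
    qed
  qed
qed

lemma contract_binary_matroid:
  assumes "finite X" "C \<subseteq> X"
  shows "contract_matroid (binary_matroid X v) C = (X - C, \<lambda>J. J \<subseteq> X - C \<and> lin_indep_mod v C J)"
proof -
  obtain B0 where B0: "basis_of (binary_matroid X v) C B0"
    using assms by (meson basis_of_binary_matroid_exists finite_subset)
  have "(\<exists>B. basis_of (binary_matroid X v) C B \<and> J \<union> B \<subseteq> X \<and> lin_indep v (J \<union> B))
      \<longleftrightarrow> lin_indep_mod v C J" if J: "J \<subseteq> X - C" for J
  proof -
    have "J \<inter> C = {}" "J \<subseteq> X"
      using J by auto
    then have iff: "lin_indep v (J \<union> B) \<longleftrightarrow> lin_indep_mod v C J"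
      if "basis_of (binary_matroid X v) C B" for B
      using lin_indep_Un_basis_iff[OF that assms(2,1)] by simp
    have "J \<union> B \<subseteq> X" if "basis_of (binary_matroid X v) C B" for B
      using that J assms(2) by (auto simp: basis_of_def)
    then show ?thesis
      using iff B0 by metis
  qed
  then have "(J \<subseteq> X - C \<and> (\<exists>B. basis_of (binary_matroid X v) C B \<and> J \<union> B \<subseteq> X \<and> lin_indep v (J \<union> B)))
      \<longleftrightarrow> J \<subseteq> X - C \<and> lin_indep_mod v C J" for J
    by blast
  moreover have "C \<inter> X = C"
    using assms(2) by blast
  ultimately show ?thesis
    unfolding contract_matroid_def ground_binary_matroid indep_binary_matroid by simp
qed

text \<open>Contracting c pivots on an entry v c k = 1, so the new columns vanish in row k. A zero
  column is contracted by the same formula, which then leaves the other columns unchanged.\<close>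
lemma lin_indep_mod_insert:
  fixes v :: "'e \<Rightarrow> 'a \<Rightarrow> bit"
  assumes pivot: "v c k = 1 \<or> (\<forall>w. v c w = 0)"
    and "c \<notin> J" "c \<notin> C" "finite J" "finite C"
  shows "lin_indep_mod v (insert c C) J = lin_indep_mod (\<lambda>e w. v e w + v e k * v c w) C J"
proof -
  define S where "S d w = (\<Sum>e\<in>J \<union> C. d e * v e w)" for d w
  have sum_insert: "(\<Sum>e\<in>J \<union> insert c C. d e * v e w) = d c * v c w + S d w" for d w
    using assms(2-5) by (simp add: S_def)
  have sum_pivot: "(\<Sum>e\<in>J \<union> C. d e * (v e w + v e k * v c w)) = S d w + S d k * v c w" for d w
    unfolding S_def by (simp add: distrib_left sum.distrib sum_distrib_right mult.assoc)
  have S_upd: "S (d(c := t)) w = S d w" for d t w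
    unfolding S_def using assms(2,3) by (intro sum.cong) auto
  show ?thesis
  proof
    assume indep: "lin_indep_mod v (insert c C) J"
    show "lin_indep_mod (\<lambda>e w. v e w + v e k * v c w) C J"
      unfolding lin_indep_mod_def sum_pivot
    proof (intro allI impI)
      fix d
      assume "\<forall>w. S d w + S d k * v c w = 0"
      then have "\<forall>w. (\<Sum>e\<in>J \<union> insert c C. (d(c := S d k)) e * v e w) = 0"
        unfolding sum_insert S_upd fun_upd_same by (simp add: add.commute)
      then show "\<forall>e\<in>J. d e = 0"
        using indep assms(2) unfolding lin_indep_mod_def by (metis fun_upd_other)
    qed
  next
    assume indep: "lin_indep_mod (\<lambda>e w. v e w + v e k * v c w) C J"
    show "lin_indep_mod v (insert c C) J"
      unfolding lin_indep_mod_def sum_insert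
    proof (intro allI impI)
      fix d
      assume zero: "\<forall>w. d c * v c w + S d w = 0"
      have "S d w + S d k * v c w = 0" for w
        using pivot zero[rule_format, of w] zero[rule_format, of k]
        by (auto simp: bit_add_eq_0_iff)
      then show "\<forall>e\<in>J. d e = 0"
        using indep unfolding lin_indep_mod_def sum_pivot by blast
    qed
  qed
qed

lemma contract_binary_matroid_singleton:
  fixes v :: "'e \<Rightarrow> 'a \<Rightarrow> bit"
  assumes "finite X" "c \<in> X" "v c k = 1 \<or> (\<forall>w. v c w = 0)"
  shows "contract_matroid (binary_matroid X v) {c} = binary_matroid (X - {c}) (\<lambda>e w. v e w + v e k * v c w)"
proof -
  have "lin_indep_mod v {c} J = lin_indep (\<lambda>e w. v e w + v e k * v c w) J" if "J \<subseteq> X - {c}" for J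
  proof -
    have "finite J" "c \<notin> J"
      using that assms(1) by (auto dest: finite_subset)
    then show ?thesis
      using lin_indep_mod_insert[of v c k, OF assms(3), of J "{}"] by simp
  qed
  then have "(\<lambda>J. J \<subseteq> X - {c} \<and> lin_indep_mod v {c} J)
      = (\<lambda>J. J \<subseteq> X - {c} \<and> lin_indep (\<lambda>e w. v e w + v e k * v c w) J)"
    by (intro ext) blast
  moreover have "contract_matroid (binary_matroid X v) {c} = (X - {c}, \<lambda>J. J \<subseteq> X - {c} \<and> lin_indep_mod v {c} J)"
    using assms(1,2) by (intro contract_binary_matroid) auto
  ultimately show ?thesis
    by (simp add: binary_matroid_def)
qed

lemma contract_binary_matroid_insert:
  fixes v :: "'e \<Rightarrow> 'a \<Rightarrow> bit"
  assumes "finite X" "insert c C \<subseteq> X" "c \<notin> C"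
  shows "contract_matroid (binary_matroid X v) (insert c C)
       = contract_matroid (contract_matroid (binary_matroid X v) {c}) C"
proof -
  obtain k where pivot: "v c k = 1 \<or> (\<forall>w. v c w = 0)"
    by (metis bit_not_one_iff)
  let ?v' = "\<lambda>e w. v e w + v e k * v c w"
  have "lin_indep_mod v (insert c C) J = lin_indep_mod ?v' C J" if "J \<subseteq> X - {c} - C" for J
  proof -
    have "finite J" "finite C" "c \<notin> J"
      using that assms by (auto dest: finite_subset)
    then show ?thesis
      using lin_indep_mod_insert[of v c k, OF pivot] assms(3) by simp
  qed
  then have "(\<lambda>J. J \<subseteq> X - {c} - C \<and> lin_indep_mod v (insert c C) J)
      = (\<lambda>J. J \<subseteq> X - {c} - C \<and> lin_indep_mod ?v' C J)"
    by (intro ext) blast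
  moreover have "X - insert c C = X - {c} - C"
    by blast
  moreover have "contract_matroid (binary_matroid X v) (insert c C)
      = (X - insert c C, \<lambda>J. J \<subseteq> X - insert c C \<and> lin_indep_mod v (insert c C) J)"
    using assms by (intro contract_binary_matroid)
  moreover have "contract_matroid (binary_matroid (X - {c}) ?v') C
      = (X - {c} - C, \<lambda>J. J \<subseteq> X - {c} - C \<and> lin_indep_mod ?v' C J)"
    using assms by (intro contract_binary_matroid) auto
  ultimately have "contract_matroid (binary_matroid X v) (insert c C)
      = contract_matroid (binary_matroid (X - {c}) ?v') C"
    by simp
  also have "\<dots> = contract_matroid (contract_matroid (binary_matroid X v) {c}) C"
    using assms by (subst contract_binary_matroid_singleton[of X c v k, OF _ _ pivot]) auto
  finally show ?thesis .
qed

lemma contract_binary_matroid_empty: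
  "finite X \<Longrightarrow> contract_matroid (binary_matroid X v) {} = binary_matroid X v"
  by (subst contract_binary_matroid) (simp_all add: binary_matroid_def)

definition matroid_iso_via :: "('e \<Rightarrow> 'f) \<Rightarrow> 'e matroid \<Rightarrow> 'f matroid \<Rightarrow> bool" where
  "matroid_iso_via f M N \<longleftrightarrow> bij_betw f (ground M) (ground N)
     \<and> (\<forall>I \<subseteq> ground M. indep M I \<longleftrightarrow> indep N (f ` I))"

lemma matroid_iso_iff_via: "matroid_iso M N \<longleftrightarrow> (\<exists>f. matroid_iso_via f M N)"
  by (simp add: matroid_iso_def matroid_iso_via_def)

lemma matroid_iso_via_comp:
  assumes "matroid_iso_via f M N" "matroid_iso_via g N P"
  shows "matroid_iso_via (g \<circ> f) M P"
proof -
  have "f ` I \<subseteq> ground N" if "I \<subseteq> ground M" for I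
    using assms(1) that unfolding matroid_iso_via_def bij_betw_def by blast
  then show ?thesis
    using assms unfolding matroid_iso_via_def by (auto intro: bij_betw_trans simp: image_comp)
qed

lemma matroid_iso_refl: "matroid_iso M M"
  unfolding matroid_iso_def by (intro exI[of _ id]) simp

lemma matroid_iso_trans: "matroid_iso M N \<Longrightarrow> matroid_iso N P \<Longrightarrow> matroid_iso M P"
  unfolding matroid_iso_iff_via by (blast intro: matroid_iso_via_comp)

lemma matroid_iso_via_inv:
  assumes "matroid_iso_via f M N"
  shows "matroid_iso_via (inv_into (ground M) f) N M"
proof -
  have bij: "bij_betw f (ground M) (ground N)"
    and indep_iff: "\<forall>I\<subseteq>ground M. indep M I = indep N (f ` I)"
    using assms unfolding matroid_iso_via_def by auto
  have "indep N I = indep M (inv_into (ground M) f ` I)" if "I \<subseteq> ground N" for I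
  proof -
    have image: "f ` ground M = ground N"
      using bij by (simp add: bij_betw_def)
    then have "inv_into (ground M) f ` I \<subseteq> ground M"
      using that by (metis image_subsetI inv_into_into subsetD)
    moreover have "f ` inv_into (ground M) f ` I = I"
      using image_inv_into_cancel[OF image that] .
    ultimately show ?thesis
      using indep_iff by metis
  qed
  then show ?thesis
    unfolding matroid_iso_via_def using bij_betw_inv_into[OF bij] by blast
qed

lemma matroid_iso_sym: "matroid_iso M N \<Longrightarrow> matroid_iso N M"
  unfolding matroid_iso_iff_via by (blast intro: matroid_iso_via_inv)

lemma ground_delete_matroid[simp]: "ground (delete_matroid M D) = ground M - D"
  by (simp add: delete_matroid_def restrict_matroid_def ground_def)

lemma indep_delete_matroid[simp]:
  "indep (delete_matroid M D) I \<longleftrightarrow> I \<subseteq> ground M - D \<and> indep M I"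
  by (simp add: delete_matroid_def restrict_matroid_def indep_def ground_def)

lemma ground_contract_matroid[simp]: "ground (contract_matroid M C) = ground M - C"
  by (simp add: contract_matroid_def ground_def)

lemma indep_contract_matroid[simp]:
  "indep (contract_matroid M C) J \<longleftrightarrow>
     J \<subseteq> ground M - C \<and> (\<exists>B. basis_of M (C \<inter> ground M) B \<and> indep M (J \<union> B))"
  by (simp add: contract_matroid_def indep_def ground_def)

lemma delete_matroid_insert: "delete_matroid M (insert d D) = delete_matroid (delete_matroid M {d}) D"
  by (simp add: delete_matroid_def restrict_matroid_def ground_def indep_def Diff_insert2[symmetric])
     (auto intro!: ext)

lemma bij_betw_Diff_image:
  assumes "bij_betw f A B" "D \<subseteq> A"
  shows "bij_betw f (A - D) (B - f ` D)"
  using assms by (intro bij_betw_DiffI bij_betw_subset[of f A B D]) (auto simp: bij_betw_def)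

lemma matroid_iso_via_delete:
  assumes iso: "matroid_iso_via f M N" and "D \<subseteq> ground M"
  shows "matroid_iso_via f (delete_matroid M D) (delete_matroid N (f ` D))"
proof -
  have bij: "bij_betw f (ground M - D) (ground N - f ` D)"
    using iso assms(2) unfolding matroid_iso_via_def by (blast intro: bij_betw_Diff_image)
  moreover have "f ` I \<subseteq> ground N - f ` D" if "I \<subseteq> ground M - D" for I
    using that bij unfolding bij_betw_def by blast
  moreover have "indep M I \<longleftrightarrow> indep N (f ` I)" if "I \<subseteq> ground M - D" for I
    using that iso unfolding matroid_iso_via_def by blast
  ultimately show ?thesis
    unfolding matroid_iso_via_def ground_delete_matroid indep_delete_matroid by blast
qed

lemma basis_of_image:
  assumes iso: "matroid_iso_via f M N" and "C \<subseteq> ground M" and basis: "basis_of M C B"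
  shows "basis_of N (f ` C) (f ` B)"
proof -
  have inj: "inj_on f (ground M)"
    and indep_iff: "\<And>I. I \<subseteq> ground M \<Longrightarrow> indep M I = indep N (f ` I)"
    using iso unfolding matroid_iso_via_def bij_betw_def by auto
  have B: "B \<subseteq> C" "indep M B" and max: "\<And>X. B \<subset> X \<Longrightarrow> X \<subseteq> C \<Longrightarrow> \<not> indep M X"
    using basis unfolding basis_of_def by auto
  show ?thesis
    unfolding basis_of_def
  proof (intro conjI allI impI)
    show "f ` B \<subseteq> f ` C" "indep N (f ` B)"
      using B assms(2) indep_iff by auto
  next
    fix B'
    assume B': "f ` B \<subset> B' \<and> B' \<subseteq> f ` C"
    then obtain X where X: "X \<subseteq> C" "B' = f ` X"
      by (meson subset_image_iff)
    have "B \<subseteq> X"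
    proof
      fix x
      assume "x \<in> B"
      then obtain y where "y \<in> X" "f x = f y"
        using B' X(2) by blast
      moreover have "x \<in> ground M" "y \<in> ground M"
        using \<open>x \<in> B\<close> \<open>y \<in> X\<close> B(1) X(1) assms(2) by auto
      ultimately show "x \<in> X"
        using inj by (metis inj_onD)
    qed
    moreover have "B \<noteq> X"
      using B' X(2) by blast
    ultimately have "\<not> indep M X"
      using max X(1) by blast
    then show "\<not> indep N B'"
      using indep_iff[of X] X assms(2) by auto
  qed
qed

lemma matroid_iso_via_contract:
  assumes iso: "matroid_iso_via f M N" and C: "C \<subseteq> ground M"
  shows "matroid_iso_via f (contract_matroid M C) (contract_matroid N (f ` C))"
proof -
  have bij: "bij_betw f (ground M) (ground N)"
    and indep_iff: "\<And>I. I \<subseteq> ground M \<Longrightarrow> indep M I = indep N (f ` I)"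
    using iso unfolding matroid_iso_via_def by auto
  have inj: "inj_on f (ground M)" and image: "f ` ground M = ground N"
    using bij by (auto simp: bij_betw_def)
  let ?g = "inv_into (ground M) f"
  have iso_inv: "matroid_iso_via ?g N M"
    using matroid_iso_via_inv[OF iso] .
  have fC: "f ` C \<subseteq> ground N"
    using C image by blast
  have "(\<exists>B. basis_of M C B \<and> indep M (J \<union> B)) \<longleftrightarrow> (\<exists>B. basis_of N (f ` C) B \<and> indep N (f ` J \<union> B))"
    if J: "J \<subseteq> ground M - C" for J
  proof
    assume "\<exists>B. basis_of M C B \<and> indep M (J \<union> B)"
    then obtain B where B: "basis_of M C B" "indep M (J \<union> B)"
      by blast
    then have "J \<union> B \<subseteq> ground M"
      using J C by (auto simp: basis_of_def)
    with B show "\<exists>B. basis_of N (f ` C) B \<and> indep N (f ` J \<union> B)"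
      using basis_of_image[OF iso C B(1)] indep_iff by (metis image_Un)
  next
    assume "\<exists>B. basis_of N (f ` C) B \<and> indep N (f ` J \<union> B)"
    then obtain B where B: "basis_of N (f ` C) B" "indep N (f ` J \<union> B)"
      by blast
    have "f ` J \<union> B \<subseteq> ground N"
      using J image B(1) fC by (auto simp: basis_of_def)
    then have "indep M (?g ` (f ` J \<union> B))"
      using iso_inv B(2) unfolding matroid_iso_via_def by blast
    moreover have "?g ` f ` J = J"
      using J inj by (meson Diff_subset inv_into_image_cancel subset_trans)
    ultimately have "indep M (J \<union> ?g ` B)"
      by (simp add: image_Un)
    moreover have "basis_of M C (?g ` B)"
      using basis_of_image[OF iso_inv fC B(1)] C inj by simp
    ultimately show "\<exists>B. basis_of M C B \<and> indep M (J \<union> B)"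
      by blast
  qed
  moreover have bij_diff: "bij_betw f (ground M - C) (ground N - f ` C)"
    using bij C by (rule bij_betw_Diff_image)
  moreover have "f ` J \<subseteq> ground N - f ` C" if "J \<subseteq> ground M - C" for J
    using that bij_diff unfolding bij_betw_def by blast
  moreover have "C \<inter> ground M = C" "f ` C \<inter> ground N = f ` C"
    using C fC by auto
  ultimately show ?thesis
    unfolding matroid_iso_via_def by auto
qed

lemma matroid_iso_contract_insert:
  assumes iso: "matroid_iso N (binary_matroid X v)" and "finite X"
    and C: "insert c C \<subseteq> ground N" "c \<notin> C"
  shows "matroid_iso (contract_matroid N (insert c C)) (contract_matroid (contract_matroid N {c}) C)"
proof -
  obtain f where f: "matroid_iso_via f N (binary_matroid X v)"
    using iso unfolding matroid_iso_iff_via by blast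
  then have inj: "inj_on f (ground N)" and image: "f ` ground N = X"
    unfolding matroid_iso_via_def bij_betw_def by auto
  have "f c \<notin> f ` C" "insert (f c) (f ` C) \<subseteq> X"
    using C inj image by (auto simp: inj_on_image_mem_iff)
  then have "contract_matroid (binary_matroid X v) (f ` insert c C)
      = contract_matroid (contract_matroid (binary_matroid X v) {f c}) (f ` C)"
    using contract_binary_matroid_insert[OF \<open>finite X\<close>] by simp
  moreover have "matroid_iso_via f (contract_matroid N (insert c C))
      (contract_matroid (binary_matroid X v) (f ` insert c C))"
    using matroid_iso_via_contract[OF f C(1)] .
  moreover have "matroid_iso_via f (contract_matroid (contract_matroid N {c}) C)
      (contract_matroid (contract_matroid (binary_matroid X v) {f c}) (f ` C))"
    using matroid_iso_via_contract[OF matroid_iso_via_contract[OF f, of "{c}"], of C] C by auto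
  ultimately show ?thesis
    by (metis matroid_iso_iff_via matroid_iso_sym matroid_iso_trans)
qed

section \<open>Columns of IAS(H) under vertex-minor operations\<close>

lemma looped_simple_graphD:
  assumes "looped_simple_graph H"
  shows "finite (verts H)" "rel H x y \<Longrightarrow> x \<in> verts H" "rel H x y \<Longrightarrow> y \<in> verts H"
    "rel H x y = rel H y x"
  using assms unfolding looped_simple_graph_def by auto

lemma verts_ns_compl[simp]: "verts (ns_compl z H) = verts H"
  by (simp add: ns_compl_def verts_def)

lemma rel_ns_compl:
  "rel (ns_compl z H) x y \<longleftrightarrow>
     (if (x \<noteq> y \<and> neighbor H z x \<and> neighbor H z y) \<or> (x = y \<and> neighbor H z x)
      then \<not> rel H x y else rel H x y)"
  by (simp add: ns_compl_def rel_def)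

lemma verts_delete_vertex[simp]: "verts (delete_vertex v H) = verts H - {v}"
  by (simp add: delete_vertex_def verts_def)

lemma rel_delete_vertex: "rel (delete_vertex v H) x y \<longleftrightarrow> x \<noteq> v \<and> y \<noteq> v \<and> rel H x y"
  by (simp add: delete_vertex_def rel_def)

lemma looped_simple_graph_ns_compl:
  assumes "looped_simple_graph H"
  shows "looped_simple_graph (ns_compl z H)"
  using looped_simple_graphD[OF assms]
  unfolding looped_simple_graph_def verts_ns_compl rel_ns_compl neighbor_def
  by (smt (verit))

lemma looped_simple_graph_delete_vertex:
  "looped_simple_graph H \<Longrightarrow> looped_simple_graph (delete_vertex v H)"
  unfolding looped_simple_graph_def rel_delete_vertex verts_delete_vertex by auto

lemma vertex_minor_trans: "vertex_minor H K \<Longrightarrow> vertex_minor G H \<Longrightarrow> vertex_minor G K"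
  by (induction rule: vertex_minor.induct) (auto intro: vertex_minor.intros)

lemma vertex_minor_ns_compl: "z \<in> verts H \<Longrightarrow> vertex_minor H (ns_compl z H)"
  by (rule vertex_minor.ns[OF vertex_minor.refl])

lemma vertex_minor_delete_vertex: "v \<in> verts H \<Longrightarrow> vertex_minor H (delete_vertex v H)"
  by (rule vertex_minor.del[OF vertex_minor.refl])

lemma vertex_minor_delete_vertex_ns_compl:
  "v \<in> verts H \<Longrightarrow> vertex_minor H (delete_vertex v (ns_compl v H))"
  by (rule vertex_minor.del[OF vertex_minor.ns[OF vertex_minor.refl]]) simp_all

fun vertex_of :: "'a welt \<Rightarrow> 'a" where
  "vertex_of (Phi v) = v"
| "vertex_of (Chi v) = v"
| "vertex_of (Psi v) = v"

text \<open>The coefficient of A(H) in the IAS-column of an element.\<close>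
fun adj_coeff :: "'a welt \<Rightarrow> bit" where
  "adj_coeff (Phi v) = 0"
| "adj_coeff (Chi v) = 1"
| "adj_coeff (Psi v) = 1"

text \<open>Zero outside V(H), so that deleting a vertex just clears its row.\<close>
definition column :: "'a lgraph \<Rightarrow> 'a welt \<Rightarrow> 'a \<Rightarrow> bit" where
  "column H e w = (if w \<in> verts H then col H e w else 0)"

definition nbhd_vec :: "'a lgraph \<Rightarrow> 'a \<Rightarrow> 'a \<Rightarrow> bit" where
  "nbhd_vec H v w = (if neighbor H v w then 1 else 0)"

lemma nbhd_vec_self[simp]: "nbhd_vec H v v = 0"
  by (simp add: nbhd_vec_def neighbor_def)

lemma nbhd_vec_sym: "looped_simple_graph H \<Longrightarrow> nbhd_vec H v w = nbhd_vec H w v"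
  by (auto simp: nbhd_vec_def neighbor_def dest: looped_simple_graphD(4))

lemma column_off_vertex:
  assumes "looped_simple_graph H" "w \<noteq> vertex_of f"
  shows "column H f w = adj_coeff f * nbhd_vec H (vertex_of f) w"
  using assms looped_simple_graphD[OF assms(1)]
  by (cases f) (auto simp: column_def adjmat_def nbhd_vec_def neighbor_def)

lemma column_decompose:
  assumes "looped_simple_graph H"
  shows "column H f w = column H f (vertex_of f) * unit_vec (vertex_of f) w
           + adj_coeff f * nbhd_vec H (vertex_of f) w"
  using column_off_vertex[OF assms] by (cases "w = vertex_of f") (simp_all add: unit_vec_def)

lemma column_delete_vertex:
  "vertex_of f \<noteq> v \<Longrightarrow> column (delete_vertex v H) f w = (if w = v then 0 else column H f w)"
  by (cases f) (auto simp: column_def adjmat_def rel_delete_vertex)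

text \<open>Local complementation at z adds row z to the rows of the neighbours of z. To keep
  IAS-columns, Phi z is exchanged with the element of z whose column is
  unit_vec z + nbhd_vec H z, i.e. Chi z if z is looped and Psi z otherwise.\<close>
definition local_swap :: "'a lgraph \<Rightarrow> 'a \<Rightarrow> 'a welt \<Rightarrow> 'a welt" where
  "local_swap H z e =
     (let p = (if rel H z z then Chi z else Psi z) in
      if e = Phi z then p else if e = p then Phi z else e)"

lemma local_swap_involution[simp]: "local_swap H z (local_swap H z e) = e"
  by (auto simp: local_swap_def Let_def)

lemma vertex_of_local_swap[simp]: "vertex_of (local_swap H z e) = vertex_of e"
  by (auto simp: local_swap_def Let_def)

lemma local_swap_other: "vertex_of e \<noteq> z \<Longrightarrow> local_swap H z e = e"
  by (auto simp: local_swap_def Let_def)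

lemma column_ns_compl_local_swap:
  assumes "looped_simple_graph H"
  shows "column (ns_compl z H) (local_swap H z e) w = column H e w + column H e z * nbhd_vec H z w"
proof -
  note graph = looped_simple_graphD[OF assms]
  show ?thesis
  proof (cases "vertex_of e = z")
    case True
    have "rel (ns_compl z H) x z = rel H x z" for x
      by (simp add: rel_ns_compl neighbor_def)
    with True graph(2-4)[of z w] show ?thesis
      by (cases e) (auto simp: local_swap_def column_def adjmat_def nbhd_vec_def neighbor_def)
  next
    case False
    then show ?thesis
      using graph(2-4)[of z w] graph(2-4)[of w "vertex_of e"] graph(2-4)[of z "vertex_of e"]
      by (cases e) (auto simp: local_swap_other column_def adjmat_def rel_ns_compl nbhd_vec_def neighbor_def)
  qed
qed

lemma column_ns_compl:
  "looped_simple_graph H \<Longrightarrow> vertex_of f \<noteq> z \<Longrightarrow>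
     column (ns_compl z H) f w = column H f w + column H f z * nbhd_vec H z w"
  using column_ns_compl_local_swap[of H z f w] by (simp add: local_swap_other)

lemma mem_W_iff: "e \<in> W H \<longleftrightarrow> vertex_of e \<in> verts H"
  by (cases e) (auto simp: W_def)

lemma transversal_iff:
  "transversal H T \<longleftrightarrow> T \<subseteq> W H \<and> (\<forall>w \<in> verts H. \<exists>!e. e \<in> T \<and> vertex_of e = w)"
proof -
  have triple: "{Phi w, Chi w, Psi w} = {e. vertex_of e = w}" for w
  proof (rule set_eqI)
    show "e \<in> {Phi w, Chi w, Psi w} \<longleftrightarrow> e \<in> {e. vertex_of e = w}" for e
      by (cases e) auto
  qed
  have "card (T \<inter> {e. vertex_of e = w}) = 1 \<longleftrightarrow> (\<exists>!e. e \<in> T \<and> vertex_of e = w)" for w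
  proof
    assume "card (T \<inter> {e. vertex_of e = w}) = 1"
    then obtain x where "T \<inter> {e. vertex_of e = w} = {x}"
      by (auto simp: card_1_singleton_iff)
    then show "\<exists>!e. e \<in> T \<and> vertex_of e = w"
      by (intro ex1I[of _ x]) auto
  next
    assume "\<exists>!e. e \<in> T \<and> vertex_of e = w"
    then obtain x where "T \<inter> {e. vertex_of e = w} = {x}"
      by blast
    then show "card (T \<inter> {e. vertex_of e = w}) = 1"
      by simp
  qed
  then show ?thesis
    unfolding transversal_def triple by simp
qed

lemma transversal_vertex_of_inj:
  assumes "transversal H T" "a \<in> T" "b \<in> T" "vertex_of a = vertex_of b"
  shows "a = b"
  using assms unfolding transversal_iff by (metis mem_W_iff subsetD)

lemma vertex_of_mem_verts: "transversal H T \<Longrightarrow> e \<in> T \<Longrightarrow> vertex_of e \<in> verts H"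
  unfolding transversal_def by (auto simp: mem_W_iff)

lemma finite_transversal: "looped_simple_graph H \<Longrightarrow> transversal H T \<Longrightarrow> finite T"
  unfolding transversal_def looped_simple_graph_def W_def by (auto intro: finite_subset)

lemma transversal_ns_compl[simp]: "transversal (ns_compl z H) T = transversal H T"
  by (simp add: transversal_def W_def)

lemma W_ns_compl[simp]: "W (ns_compl z H) = W H"
  by (simp add: W_def)

lemma transversal_delete_vertex:
  assumes T: "transversal H T" and "e \<in> T"
  shows "transversal (delete_vertex (vertex_of e) H) (T - {e})"
  using T transversal_vertex_of_inj[OF T _ \<open>e \<in> T\<close>]
  unfolding transversal_iff by (auto simp: mem_W_iff)

lemma transversal_local_swap:
  assumes "transversal H T"
  shows "transversal (ns_compl z H) (local_swap H z ` T)"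
proof -
  have W_sub: "local_swap H z ` T \<subseteq> W H"
    using assms unfolding transversal_def by (auto simp: mem_W_iff)
  have unique: "\<exists>!e. e \<in> local_swap H z ` T \<and> vertex_of e = w" if "w \<in> verts H" for w
  proof -
    have "\<exists>!e. e \<in> T \<and> vertex_of e = w"
      using assms that by (simp add: transversal_iff)
    then obtain e where e: "e \<in> T" "vertex_of e = w"
      by (meson ex1_implies_ex)
    show ?thesis
    proof (rule ex1I[of _ "local_swap H z e"])
      show "local_swap H z e \<in> local_swap H z ` T \<and> vertex_of (local_swap H z e) = w"
        using e by simp
    next
      fix y
      assume "y \<in> local_swap H z ` T \<and> vertex_of y = w"
      then obtain a where a: "a \<in> T" "y = local_swap H z a" "vertex_of a = w"
        by auto
      then have "a = e"
        using transversal_vertex_of_inj[OF assms a(1) e(1)] e(2) by simp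
      then show "y = local_swap H z e"
        using a(2) by simp
    qed
  qed
  have "transversal H (local_swap H z ` T)"
    unfolding transversal_iff by (intro conjI ballI W_sub unique)
  then show ?thesis
    by simp
qed

lemma transverse_matroid_eq_binary_matroid:
  assumes "T \<subseteq> W H"
  shows "transverse_matroid H T = binary_matroid T (column H)"
proof -
  have "(\<forall>w\<in>verts H. (\<Sum>e\<in>I. c e * col H e w) = 0) \<longleftrightarrow> (\<forall>w. (\<Sum>e\<in>I. c e * column H e w) = 0)"
    for c I
  proof -
    have "(\<Sum>e\<in>I. c e * column H e w) = (if w \<in> verts H then (\<Sum>e\<in>I. c e * col H e w) else 0)" for w
      by (simp add: column_def)
    then show ?thesis
      by auto
  qed
  then have "I \<subseteq> W H \<and> (\<forall>c. (\<forall>w\<in>verts H. (\<Sum>e\<in>I. c e * col H e w) = 0) \<longrightarrow> (\<forall>e\<in>I. c e = 0))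
      \<longleftrightarrow> lin_indep (column H) I" if "I \<subseteq> T" for I
    using that assms unfolding lin_indep_def by blast
  then show ?thesis
    unfolding transverse_matroid_def restrict_matroid_def IAS_matroid_def binary_matroid_def indep_def
    by (auto intro!: ext)
qed

lemma binary_matroid_column_ns_compl:
  assumes "looped_simple_graph H" "\<forall>f\<in>X. vertex_of f \<noteq> z"
  shows "binary_matroid X (column (ns_compl z H)) = binary_matroid X (column H)"
proof (rule binary_matroid_eqI)
  fix I
  assume "I \<subseteq> X"
  then have "lin_indep (column (ns_compl z H)) I
      = lin_indep (\<lambda>f w. column H f w + column H f z * nbhd_vec H z w) I"
    using assms by (intro lin_indep_cong) (auto simp: column_ns_compl)
  also have "\<dots> = lin_indep (column H) I"
    by (simp add: lin_indep_add_row)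
  finally show "lin_indep (column (ns_compl z H)) I = lin_indep (column H) I" .
qed

lemma matroid_iso_via_local_swap:
  assumes "looped_simple_graph H"
  shows "matroid_iso_via (local_swap H z)
           (binary_matroid T (column H)) (binary_matroid (local_swap H z ` T) (column (ns_compl z H)))"
proof -
  have "lin_indep (column (ns_compl z H)) (local_swap H z ` I) = lin_indep (column H) I" for I
  proof -
    have "lin_indep (column (ns_compl z H)) (local_swap H z ` I)
        = lin_indep (\<lambda>e. column (ns_compl z H) (local_swap H z e)) I"
      by (rule lin_indep_reindex) simp
    also have "\<dots> = lin_indep (\<lambda>e w. column H e w + column H e z * nbhd_vec H z w) I"
      by (rule lin_indep_cong) (simp add: column_ns_compl_local_swap[OF assms])
    also have "\<dots> = lin_indep (column H) I"
      by (simp add: lin_indep_add_row)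
    finally show ?thesis .
  qed
  moreover have "inj_on (local_swap H z) T"
    by (metis inj_onI local_swap_involution)
  ultimately show ?thesis
    unfolding matroid_iso_via_def by (auto simp: bij_betw_def)
qed

section \<open>Deleting and contracting one element\<close>

lemma sum_column_ns_compl:
  assumes "looped_simple_graph H" "\<forall>f\<in>X. vertex_of f \<noteq> z"
  shows "(\<Sum>f\<in>X. d f * column (ns_compl z H) f w)
       = (\<Sum>f\<in>X. d f * column H f w) + (\<Sum>f\<in>X. d f * column H f z) * nbhd_vec H z w"
  using assms by (simp add: column_ns_compl distrib_left sum.distrib sum_distrib_right mult.assoc)

text \<open>Isotropy of a transversal: adj_coeff g * column H f (vertex_of g) is symmetric in f and g.
  Expanding the unit vector and the neighbourhood vector of v in the other columns, the double
  sum Q below evaluates to 0 one way and to 1 the other.\<close>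
lemma not_in_span_unit_vec_and_nbhd_vec:
  assumes H: "looped_simple_graph H" and T: "transversal H T" and "e \<in> T"
    and "in_span (column H) (T - {e}) (unit_vec (vertex_of e))"
  shows "\<not> in_span (column H) (T - {e}) (nbhd_vec H (vertex_of e))"
proof
  define S where "S = T - {e}"
  define v where "v = vertex_of e"
  assume "in_span (column H) (T - {e}) (nbhd_vec H (vertex_of e))"
  then obtain d2 where d2: "\<And>w. nbhd_vec H v w = (\<Sum>g\<in>S. d2 g * column H g w)"
    unfolding in_span_def S_def v_def by blast
  obtain d1 where d1: "\<And>w. unit_vec v w = (\<Sum>f\<in>S. d1 f * column H f w)"
    using assms(4) unfolding in_span_def S_def v_def by blast
  have off: "vertex_of f \<noteq> v" if "f \<in> S" for f
    using transversal_vertex_of_inj[OF T _ \<open>e \<in> T\<close>] that unfolding S_def v_def by blast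
  have sym: "adj_coeff g * column H f (vertex_of g) = adj_coeff f * column H g (vertex_of f)"
    if "f \<in> S" "g \<in> S" for f g
  proof (cases "f = g")
    case False
    then have "vertex_of f \<noteq> vertex_of g"
      using transversal_vertex_of_inj[OF T] that unfolding S_def by blast
    then show ?thesis
      using nbhd_vec_sym[OF H] by (simp add: column_off_vertex[OF H] ac_simps)
  qed simp
  define Q where "Q = (\<Sum>f\<in>S. \<Sum>g\<in>S. d1 f * d2 g * (adj_coeff g * column H f (vertex_of g)))"
  have "Q = (\<Sum>g\<in>S. d2 g * adj_coeff g * (\<Sum>f\<in>S. d1 f * column H f (vertex_of g)))"
    unfolding Q_def by (subst sum.swap) (simp add: sum_distrib_left ac_simps)
  also have "\<dots> = (\<Sum>g\<in>S. d2 g * adj_coeff g * unit_vec v (vertex_of g))"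
    by (simp add: d1)
  also have "\<dots> = 0"
    using off by (simp add: unit_vec_def)
  finally have "Q = 0" .
  have "Q = (\<Sum>f\<in>S. \<Sum>g\<in>S. d1 f * d2 g * (adj_coeff f * column H g (vertex_of f)))"
    unfolding Q_def by (intro sum.cong[OF HOL.refl]) (metis sym)
  also have "\<dots> = (\<Sum>f\<in>S. d1 f * adj_coeff f * (\<Sum>g\<in>S. d2 g * column H g (vertex_of f)))"
    by (simp add: sum_distrib_left ac_simps)
  also have "\<dots> = (\<Sum>f\<in>S. d1 f * column H f v)"
  proof (rule sum.cong[OF HOL.refl])
    fix f
    assume "f \<in> S"
    have "(\<Sum>g\<in>S. d2 g * column H g (vertex_of f)) = nbhd_vec H (vertex_of f) v"
      using d2[of "vertex_of f"] nbhd_vec_sym[OF H] by simp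
    then show "d1 f * adj_coeff f * (\<Sum>g\<in>S. d2 g * column H g (vertex_of f)) = d1 f * column H f v"
      using off[OF \<open>f \<in> S\<close>] by (simp add: column_off_vertex[OF H] mult.assoc)
  qed
  also have "\<dots> = 1"
    using d1[of v] by (simp add: unit_vec_def)
  finally show False
    using \<open>Q = 0\<close> by simp
qed

lemma delete_transverse_matroid_eq_delete_vertex:
  assumes H: "looped_simple_graph H" and T: "transversal H T" and "e \<in> T"
    and not_span: "\<not> in_span (column H) (T - {e}) (unit_vec (vertex_of e))"
  shows "delete_matroid (transverse_matroid H T) {e}
       = transverse_matroid (delete_vertex (vertex_of e) H) (T - {e})"
proof -
  let ?v = "vertex_of e"
  have off: "vertex_of f \<noteq> ?v" if "f \<in> T - {e}" for f
    using transversal_vertex_of_inj[OF T _ \<open>e \<in> T\<close>] that by blast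
  have "delete_matroid (transverse_matroid H T) {e} = binary_matroid (T - {e}) (column H)"
    using T \<open>e \<in> T\<close> by (simp add: transverse_matroid_eq_binary_matroid transversal_def delete_binary_matroid)
  also have "\<dots> = binary_matroid (T - {e}) (column (delete_vertex ?v H))"
  proof (rule binary_matroid_eqI)
    fix I
    assume I: "I \<subseteq> T - {e}"
    then have "lin_indep (column (delete_vertex ?v H)) I
        = lin_indep (\<lambda>f w. if w = ?v then 0 else column H f w) I"
      using off by (intro lin_indep_cong) (simp add: column_delete_vertex subset_iff)
    also have "\<dots> = lin_indep (column H) I"
      using not_span I finite_transversal[OF H T] by (intro lin_indep_zero_row[of _ "T - {e}"]) auto
    finally show "lin_indep (column H) I = lin_indep (column (delete_vertex ?v H)) I" ..
  qed
  also have "\<dots> = transverse_matroid (delete_vertex ?v H) (T - {e})"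
    using transversal_delete_vertex[OF T \<open>e \<in> T\<close>]
    by (simp add: transverse_matroid_eq_binary_matroid transversal_def)
  finally show ?thesis .
qed

definition transverse_of_vertex_minor :: "'a lgraph \<Rightarrow> 'e matroid \<Rightarrow> bool" where
  "transverse_of_vertex_minor G N \<longleftrightarrow>
     (\<exists>H T. vertex_minor G H \<and> looped_simple_graph H \<and> transversal H T
        \<and> matroid_iso N (transverse_matroid H T))"

lemma transverse_of_vertex_minorI:
  "vertex_minor G H \<Longrightarrow> looped_simple_graph H \<Longrightarrow> transversal H T \<Longrightarrow>
     matroid_iso N (transverse_matroid H T) \<Longrightarrow> transverse_of_vertex_minor G N"
  unfolding transverse_of_vertex_minor_def by blast

lemma transverse_of_vertex_minor_transverse_matroid:
  "looped_simple_graph G \<Longrightarrow> transversal G T \<Longrightarrow> transverse_of_vertex_minor G (transverse_matroid G T)"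
  by (rule transverse_of_vertex_minorI[OF vertex_minor.refl _ _ matroid_iso_refl])

lemma transverse_of_vertex_minor_iso:
  "matroid_iso N N' \<Longrightarrow> transverse_of_vertex_minor G N' \<Longrightarrow> transverse_of_vertex_minor G N"
  unfolding transverse_of_vertex_minor_def by (blast intro: matroid_iso_trans)

lemma transverse_of_vertex_minor_trans:
  "vertex_minor G H \<Longrightarrow> transverse_of_vertex_minor H N \<Longrightarrow> transverse_of_vertex_minor G N"
  unfolding transverse_of_vertex_minor_def by (blast intro: vertex_minor_trans)

lemma transverse_of_vertex_minor_delete_transverse_matroid:
  assumes H: "looped_simple_graph H" and T: "transversal H T" and "e \<in> T"
  shows "transverse_of_vertex_minor H (delete_matroid (transverse_matroid H T) {e})"
proof -
  let ?v = "vertex_of e"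
  have v: "?v \<in> verts H"
    using vertex_of_mem_verts[OF T \<open>e \<in> T\<close>] .
  show ?thesis
  proof (cases "in_span (column H) (T - {e}) (unit_vec ?v)")
    case False
    then show ?thesis
      using delete_transverse_matroid_eq_delete_vertex[OF H T \<open>e \<in> T\<close>]
        transversal_delete_vertex[OF T \<open>e \<in> T\<close>] vertex_minor_delete_vertex[OF v]
        looped_simple_graph_delete_vertex[OF H]
      by (auto intro: transverse_of_vertex_minorI matroid_iso_refl)
  next
    case True
    let ?Hn = "ns_compl ?v H"
    have Hn: "looped_simple_graph ?Hn"
      using H by (rule looped_simple_graph_ns_compl)
    have off: "\<forall>f\<in>T - {e}. vertex_of f \<noteq> ?v"
      using transversal_vertex_of_inj[OF T _ \<open>e \<in> T\<close>] by blast
    have "\<not> in_span (column ?Hn) (T - {e}) (unit_vec ?v)"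
    proof
      assume "in_span (column ?Hn) (T - {e}) (unit_vec ?v)"
      then obtain d where d: "\<And>w. unit_vec ?v w = (\<Sum>f\<in>T - {e}. d f * column ?Hn f w)"
        unfolding in_span_def by blast
      define s where "s w = (\<Sum>f\<in>T - {e}. d f * column H f w)" for w
      have unit: "unit_vec ?v w = s w + s ?v * nbhd_vec H ?v w" for w
        unfolding d s_def using sum_column_ns_compl[OF H off] .
      then have "s ?v = 1"
        using unit[of ?v] by (simp add: unit_vec_def)
      then have "nbhd_vec H ?v w = unit_vec ?v w + s w" for w
        using unit[of w] by simp
      moreover have "in_span (column H) (T - {e}) s"
        unfolding in_span_def s_def by blast
      ultimately have "in_span (column H) (T - {e}) (nbhd_vec H ?v)"
        using in_span_add[OF True] by presburger
      then show False
        using not_in_span_unit_vec_and_nbhd_vec[OF H T \<open>e \<in> T\<close> True] by blast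
    qed
    then have "delete_matroid (transverse_matroid ?Hn T) {e}
        = transverse_matroid (delete_vertex ?v ?Hn) (T - {e})"
      using delete_transverse_matroid_eq_delete_vertex[OF Hn _ \<open>e \<in> T\<close>] T by simp
    moreover have "delete_matroid (transverse_matroid H T) {e} = delete_matroid (transverse_matroid ?Hn T) {e}"
      using T \<open>e \<in> T\<close> binary_matroid_column_ns_compl[OF H off]
      by (simp add: transverse_matroid_eq_binary_matroid transversal_def delete_binary_matroid)
    ultimately show ?thesis
      using transversal_delete_vertex[of ?Hn T e] T \<open>e \<in> T\<close> vertex_minor_delete_vertex_ns_compl[OF v]
        looped_simple_graph_delete_vertex[OF Hn]
      by (auto intro: transverse_of_vertex_minorI matroid_iso_refl)
  qed
qed

lemma transverse_of_vertex_minor_contract_pivot: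
  assumes H: "looped_simple_graph H" and T: "transversal H T" and "e \<in> T"
    and pivot: "column H e (vertex_of e) = 1"
  shows "transverse_of_vertex_minor H (contract_matroid (transverse_matroid H T) {e})"
proof -
  let ?v = "vertex_of e"
  define K where "K = (if adj_coeff e = 1 then delete_vertex ?v (ns_compl ?v H) else delete_vertex ?v H)"
  have v: "?v \<in> verts H"
    using vertex_of_mem_verts[OF T \<open>e \<in> T\<close>] .
  have K: "vertex_minor H K" "looped_simple_graph K" "transversal K (T - {e})"
    using transversal_delete_vertex[of _ T e] T \<open>e \<in> T\<close> v H
    by (simp_all add: K_def vertex_minor_delete_vertex vertex_minor_delete_vertex_ns_compl
        looped_simple_graph_delete_vertex looped_simple_graph_ns_compl)
  have off: "vertex_of f \<noteq> ?v" if "f \<in> T - {e}" for f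
    using transversal_vertex_of_inj[OF T _ \<open>e \<in> T\<close>] that by blast
  have col_e: "column H e w = unit_vec ?v w + adj_coeff e * nbhd_vec H ?v w" for w
    using column_decompose[OF H, of e w] pivot by simp
  have "contract_matroid (transverse_matroid H T) {e}
      = binary_matroid (T - {e}) (\<lambda>f w. column H f w + column H f ?v * column H e w)"
    using T \<open>e \<in> T\<close> pivot finite_transversal[OF H T]
    by (simp add: transverse_matroid_eq_binary_matroid transversal_def contract_binary_matroid_singleton)
  also have "\<dots> = binary_matroid (T - {e}) (column K)"
  proof (rule binary_matroid_cong)
    fix f w
    assume "f \<in> T - {e}"
    then have "vertex_of f \<noteq> ?v"
      by (rule off)
    then show "column H f w + column H f ?v * column H e w = column K f w"
      using col_e[of w] column_ns_compl[OF H, of f ?v w]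
      by (cases "adj_coeff e = 1"; cases "w = ?v")
         (auto simp: K_def column_delete_vertex unit_vec_def distrib_left)
  qed
  also have "\<dots> = transverse_matroid K (T - {e})"
    using K(3) by (simp add: transverse_matroid_eq_binary_matroid transversal_def)
  finally show ?thesis
    using K by (auto intro: transverse_of_vertex_minorI matroid_iso_refl)
qed

lemma transverse_of_vertex_minor_contract_transverse_matroid:
  assumes H: "looped_simple_graph H" and T: "transversal H T" and "e \<in> T"
  shows "transverse_of_vertex_minor H (contract_matroid (transverse_matroid H T) {e})"
proof -
  let ?v = "vertex_of e"
  have v: "?v \<in> verts H"
    using vertex_of_mem_verts[OF T \<open>e \<in> T\<close>] .
  consider (pivot) "column H e ?v = 1"
    | (isolated) "column H e ?v = 0" "\<forall>u. \<not> neighbor H ?v u"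
    | (neighbor) u where "column H e ?v = 0" "neighbor H ?v u"
    by (metis bit_not_one_iff)
  then show ?thesis
  proof cases
    case pivot
    then show ?thesis
      by (rule transverse_of_vertex_minor_contract_pivot[OF H T \<open>e \<in> T\<close>])
  next
    case isolated
    have zero: "\<forall>w. column H e w = 0"
      using column_decompose[OF H, of e, unfolded isolated(1)] isolated(2) by (simp add: nbhd_vec_def)
    have "contract_matroid (transverse_matroid H T) {e} = binary_matroid (T - {e}) (column H)"
      using T \<open>e \<in> T\<close> finite_transversal[OF H T] zero
      by (simp add: transverse_matroid_eq_binary_matroid transversal_def
          contract_binary_matroid_singleton[where k = ?v])
    also have "\<dots> = delete_matroid (transverse_matroid H T) {e}"
      using T \<open>e \<in> T\<close>
      by (simp add: transverse_matroid_eq_binary_matroid transversal_def delete_binary_matroid)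
    finally show ?thesis
      using transverse_of_vertex_minor_delete_transverse_matroid[OF H T \<open>e \<in> T\<close>] by simp
  next
    case (neighbor u)
    have "adj_coeff e = 1"
      using v neighbor(1) by (cases e) (auto simp: column_def)
    have u: "u \<in> verts H" "u \<noteq> ?v" "neighbor H u ?v"
      using neighbor(2) looped_simple_graphD[OF H] by (auto simp: neighbor_def)
    let ?Hu = "ns_compl u H"
    let ?swap = "local_swap H u"
    have swap_e: "?swap e = e"
      using u(2) by (simp add: local_swap_other)
    have "column ?Hu e ?v = column H e ?v + column H e u * nbhd_vec H u ?v"
      using column_ns_compl[OF H] u(2) by simp
    then have "column ?Hu e ?v = 1"
      using neighbor u(2,3) \<open>adj_coeff e = 1\<close> by (simp add: column_off_vertex[OF H] nbhd_vec_def)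
    then have "transverse_of_vertex_minor ?Hu (contract_matroid (transverse_matroid ?Hu (?swap ` T)) {e})"
      using transverse_of_vertex_minor_contract_pivot[OF looped_simple_graph_ns_compl[OF H]
          transversal_local_swap[OF T]] \<open>e \<in> T\<close> swap_e by (metis image_eqI)
    then have "transverse_of_vertex_minor H (contract_matroid (transverse_matroid ?Hu (?swap ` T)) {e})"
      using transverse_of_vertex_minor_trans vertex_minor_ns_compl[OF u(1)] by blast
    moreover have "matroid_iso_via ?swap (contract_matroid (transverse_matroid H T) {e})
        (contract_matroid (transverse_matroid ?Hu (?swap ` T)) {e})"
      using matroid_iso_via_contract[OF matroid_iso_via_local_swap[OF H, of u T], of "{e}"]
        T transversal_local_swap[OF T] \<open>e \<in> T\<close> swap_e
      by (simp add: transverse_matroid_eq_binary_matroid transversal_def)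
    ultimately show ?thesis
      using transverse_of_vertex_minor_iso matroid_iso_iff_via by blast
  qed
qed

section \<open>Closure under matroid minors\<close>

lemma finite_ground_transverse_of_vertex_minor:
  assumes "transverse_of_vertex_minor G N"
  shows "finite (ground N)"
proof -
  obtain H T f where "vertex_minor G H" "looped_simple_graph H" "transversal H T"
    "matroid_iso_via f N (transverse_matroid H T)"
    using assms unfolding transverse_of_vertex_minor_def matroid_iso_iff_via by blast
  then show ?thesis
    by (metis bij_betw_finite finite_transversal ground_binary_matroid matroid_iso_via_def
        transversal_def transverse_matroid_eq_binary_matroid)
qed

lemma transverse_of_vertex_minor_delete_singleton:
  assumes "transverse_of_vertex_minor G N" "e \<in> ground N"
  shows "transverse_of_vertex_minor G (delete_matroid N {e})"
proof -
  obtain H T f where H: "vertex_minor G H" "looped_simple_graph H" "transversal H T"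
    and f: "matroid_iso_via f N (transverse_matroid H T)"
    using assms(1) unfolding transverse_of_vertex_minor_def matroid_iso_iff_via by blast
  have "f e \<in> T"
    using f assms(2) H(3) unfolding matroid_iso_via_def bij_betw_def
    by (auto simp: transverse_matroid_eq_binary_matroid transversal_def)
  then have "transverse_of_vertex_minor G (delete_matroid (transverse_matroid H T) {f e})"
    using transverse_of_vertex_minor_delete_transverse_matroid[OF H(2,3)] H(1)
    by (blast intro: transverse_of_vertex_minor_trans)
  moreover have "matroid_iso_via f (delete_matroid N {e}) (delete_matroid (transverse_matroid H T) {f e})"
    using matroid_iso_via_delete[OF f, of "{e}"] assms(2) by simp
  ultimately show ?thesis
    using transverse_of_vertex_minor_iso matroid_iso_iff_via by blast
qed

lemma transverse_of_vertex_minor_contract_singleton: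
  assumes "transverse_of_vertex_minor G N" "e \<in> ground N"
  shows "transverse_of_vertex_minor G (contract_matroid N {e})"
proof -
  obtain H T f where H: "vertex_minor G H" "looped_simple_graph H" "transversal H T"
    and f: "matroid_iso_via f N (transverse_matroid H T)"
    using assms(1) unfolding transverse_of_vertex_minor_def matroid_iso_iff_via by blast
  have "f e \<in> T"
    using f assms(2) H(3) unfolding matroid_iso_via_def bij_betw_def
    by (auto simp: transverse_matroid_eq_binary_matroid transversal_def)
  then have "transverse_of_vertex_minor G (contract_matroid (transverse_matroid H T) {f e})"
    using transverse_of_vertex_minor_contract_transverse_matroid[OF H(2,3)] H(1)
    by (blast intro: transverse_of_vertex_minor_trans)
  moreover have "matroid_iso_via f (contract_matroid N {e}) (contract_matroid (transverse_matroid H T) {f e})"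
    using matroid_iso_via_contract[OF f, of "{e}"] assms(2) by simp
  ultimately show ?thesis
    using transverse_of_vertex_minor_iso matroid_iso_iff_via by blast
qed

lemma transverse_of_vertex_minor_delete:
  assumes "transverse_of_vertex_minor G N" "D \<subseteq> ground N"
  shows "transverse_of_vertex_minor G (delete_matroid N D)"
proof -
  have "finite D"
    using assms finite_ground_transverse_of_vertex_minor finite_subset by blast
  then show ?thesis
    using assms
  proof (induction D arbitrary: N rule: finite_induct)
    case empty
    have "matroid_iso (delete_matroid N {}) N"
      unfolding matroid_iso_def by (intro exI[of _ id]) auto
    then show ?case
      using empty(1) by (rule transverse_of_vertex_minor_iso)
  next
    case (insert d D)
    have "transverse_of_vertex_minor G (delete_matroid N {d})"
      using insert.prems by (intro transverse_of_vertex_minor_delete_singleton) auto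
    moreover have "D \<subseteq> ground (delete_matroid N {d})"
      using insert by auto
    ultimately have "transverse_of_vertex_minor G (delete_matroid (delete_matroid N {d}) D)"
      by (rule insert.IH)
    then show ?case
      by (simp only: delete_matroid_insert[of N d D])
  qed
qed

lemma transverse_of_vertex_minor_contract:
  assumes "transverse_of_vertex_minor G N" "C \<subseteq> ground N"
  shows "transverse_of_vertex_minor G (contract_matroid N C)"
proof -
  have "finite C"
    using assms finite_ground_transverse_of_vertex_minor finite_subset by blast
  then show ?thesis
    using assms
  proof (induction C arbitrary: N rule: finite_induct)
    case empty
    obtain H T where H: "vertex_minor G H" "looped_simple_graph H" "transversal H T"
      and iso: "matroid_iso N (transverse_matroid H T)"
      using empty unfolding transverse_of_vertex_minor_def by blast
    have "matroid_iso (contract_matroid N {}) (contract_matroid (transverse_matroid H T) {})"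
      using iso unfolding matroid_iso_iff_via by (metis image_empty matroid_iso_via_contract empty_subsetI)
    also have "contract_matroid (transverse_matroid H T) {} = transverse_matroid H T"
      using H(3) finite_transversal[OF H(2,3)]
      by (simp add: transverse_matroid_eq_binary_matroid transversal_def contract_binary_matroid_empty)
    finally show ?case
      using H by (blast intro: transverse_of_vertex_minorI)
  next
    case (insert c C)
    obtain H T where H: "vertex_minor G H" "looped_simple_graph H" "transversal H T"
      and iso: "matroid_iso N (transverse_matroid H T)"
      using insert.prems unfolding transverse_of_vertex_minor_def by blast
    have "transverse_of_vertex_minor G (contract_matroid N {c})"
      using insert.prems by (intro transverse_of_vertex_minor_contract_singleton) auto
    moreover have "C \<subseteq> ground (contract_matroid N {c})"
      using insert by auto
    ultimately have "transverse_of_vertex_minor G (contract_matroid (contract_matroid N {c}) C)"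
      by (rule insert.IH)
    moreover have "matroid_iso (contract_matroid N (insert c C)) (contract_matroid (contract_matroid N {c}) C)"
      using iso H(3) finite_transversal[OF H(2,3)] insert
      by (intro matroid_iso_contract_insert[where X = T])
         (simp_all add: transverse_matroid_eq_binary_matroid transversal_def)
    ultimately show ?case
      by (rule transverse_of_vertex_minor_iso[rotated])
  qed
qed

lemma transverse_of_vertex_minor_matroid_minor:
  "matroid_minor M N \<Longrightarrow> transverse_of_vertex_minor G M \<Longrightarrow> transverse_of_vertex_minor G N"
  by (induction rule: matroid_minor.induct)
     (auto intro: transverse_of_vertex_minor_delete transverse_of_vertex_minor_contract)

theorem proposition8p4:
  fixes G :: "'a lgraph" and T :: "'a welt set" and N :: "'a welt matroid"
  assumes "looped_simple_graph G"
    and "transversal G T"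
    and "matroid_minor (transverse_matroid G T) N"
  shows "\<exists>H T'. vertex_minor G H \<and> transversal H T' \<and> matroid_iso N (transverse_matroid H T')"
proof -
  have "transverse_of_vertex_minor G (transverse_matroid G T)"
    using assms(1,2) by (rule transverse_of_vertex_minor_transverse_matroid)
  then have "transverse_of_vertex_minor G N"
    using assms(3) by (rule transverse_of_vertex_minor_matroid_minor[rotated])
  then show ?thesis
    unfolding transverse_of_vertex_minor_def by blast
qed

end
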